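(* Let $\mathcal C_1,\mathcal C_2$ be normal rational curves in $\mathrm{PG}(N,q)$ spanning disjoint subspaces, and let $\mathcal C_1^*,\mathcal C_2^*$ be their $\mathbb{F}_{q^n}$-extensions in $\mathrm{PG}(N,q^n)$. Let $P\in\mathcal C_1^*\setminus\mathcal C_1$ and $Q\in\mathcal C_2^*\setminus\mathcal C_2$, with $P$ not contained in the $\mathbb{F}_{q^2}$-extension of $\mathcal C_1$. Then there is at most one normal rational scroll $S^*$ of $\mathrm{PG}(N,q^n)$ defined by $\mathcal C_1^*,\mathcal C_2^*$ that contains the line $\langle P,Q\rangle$ and is the $\mathbb{F}_{q^n}$-extension of a normal rational scroll of $\mathrm{PG}(N,q)$ defined by $\mathcal C_1,\mathcal C_2$. Moreover, if such a scroll exists, it contains the lines $\langle P^{\sigma^i},Q^{\sigma^i}\rangle$ for every $i$.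
   Context: $\mathrm{PG}(N,q)$ is embedded in $\mathrm{PG}(N,q^n)$ as the set of points with coordinates in $\mathbb{F}_q$ (up to scalar), and $\sigma$ is the collineation of $\mathrm{PG}(N,q^n)$ raising all coordinates to the $q$-th power, so $\mathrm{PG}(N,q)$ is the set of $\sigma$-fixed points. A normal rational curve of degree $d$ ($1\le d\le q$) in $\mathrm{PG}(N,q)$ is the image of a map $\rho:\mathrm{PG}(1,q)\to\mathrm{PG}(N,q)$, $(s,t)_{\mathbb{F}_q}\mapsto(\sum_{i=0}^d s^{d-i}t^ie_i)_{\mathbb{F}_q}$, for linearly independent vectors $e_0,\dots,e_d$; its $\mathbb{F}_{q^j}$-extension ($j\mid n$) is the image of the same formula with $(s,t)$ ranging over $\mathbb{F}_{q^j}^2\setminus\{0\}$. Given normal rational curves $\mathcal C_1=\mathrm{Im}(\rho_1)$ and $\mathcal C_2=\mathrm{Im}(\rho_2)$ spanning disjoint subspaces, a normal rational scroll defined by $\mathcal C_1,\mathcal C_2$ is a set of lines $\{\langle\rho_1(X),\rho_2(\psi(X))\rangle:X\in\mathrm{PG}(1,q)\}$ for some $\psi\in\mathrm{PGL}(2,q)$ (this family does not depend on the choice of parametrisations $\rho_i$). Its $\mathbb{F}_{q^n}$-extension is $\{\langle\rho_1^*(X),\rho_2^*(\psi^*(X))\rangle:X\in\mathrm{PG}(1,q^n)\}$, where $\rho_i^*,\psi^*$ are the same formulas over $\mathbb{F}_{q^n}$; a normal rational scroll of $\mathrm{PG}(N,q^n)$ defined by $\mathcal C_1^*,\mathcal C_2^*$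 is defined analogously with $\psi\in\mathrm{PGL}(2,q^n)$. *)

theory Defs
  imports "HOL-Computational_Algebra.Primes"
begin

text \<open>Model: the field F_{q^n} is a finite field type 'a with CARD('a) = q^n,
  q a prime power.  Vectors of the underlying space of PG(N,q^n) are functions
  'm => 'a for a finite coordinate type 'm (so N+1 = CARD('m)).  Projective
  subspaces are represented by their underlying vector subspaces (sets of vectors).\<close>

definition subfield_pow :: "nat \<Rightarrow> nat \<Rightarrow> ('a::field) set" where
  "subfield_pow q j = {x. x ^ (q ^ j) = x}"

abbreviation GFq :: "nat \<Rightarrow> ('a::field) set" where
  "GFq q \<equiv> subfield_pow q 1"

definition pt :: "('m \<Rightarrow> 'a::field) \<Rightarrow> ('m \<Rightarrow> 'a) set" where
  "pt v = {(\<lambda>k. c * v k) | c. True}"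

definition pline :: "('m \<Rightarrow> 'a::field) set \<Rightarrow> ('m \<Rightarrow> 'a) set \<Rightarrow> ('m \<Rightarrow> 'a) set" where
  "pline A B = {(\<lambda>k. x k + y k) | x y. x \<in> A \<and> y \<in> B}"

text \<open>The collineation sigma^i (coordinates raised to the power q^i) applied to a subspace.\<close>
definition frob :: "nat \<Rightarrow> nat \<Rightarrow> ('m \<Rightarrow> 'a::field) set \<Rightarrow> ('m \<Rightarrow> 'a) set" where
  "frob q i A = (\<lambda>v k. v k ^ (q ^ i)) ` A"

definition rho :: "nat \<Rightarrow> (nat \<Rightarrow> 'm \<Rightarrow> 'a::field) \<Rightarrow> 'a \<Rightarrow> 'a \<Rightarrow> 'm \<Rightarrow> 'a" where
  "rho d e s t = (\<lambda>k. \<Sum>i\<le>d. s ^ (d - i) * t ^ i * e i k)"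

definition span_over :: "'a set \<Rightarrow> nat \<Rightarrow> (nat \<Rightarrow> 'm \<Rightarrow> 'a::field) \<Rightarrow> ('m \<Rightarrow> 'a) set" where
  "span_over K d e = {(\<lambda>k. \<Sum>i\<le>d. c i * e i k) | c. \<forall>i\<le>d. c i \<in> K}"

text \<open>e_0..e_d are the data of a normal rational curve of degree d of PG(N,q):
  1 <= d <= q, vectors with coordinates in F_q, linearly independent over F_q.\<close>
definition nrc_data :: "nat \<Rightarrow> nat \<Rightarrow> (nat \<Rightarrow> 'm \<Rightarrow> 'a::field) \<Rightarrow> bool" where
  "nrc_data q d e \<longleftrightarrow> 1 \<le> d \<and> d \<le> q \<and>
     (\<forall>i\<le>d. \<forall>k. e i k \<in> GFq q) \<and>
     (\<forall>c. (\<forall>i\<le>d. c i \<in> GFq q) \<longrightarrow> (\<lambda>k. \<Sum>i\<le>d. c i * e i k) = (\<lambda>k. 0)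
          \<longrightarrow> (\<forall>i\<le>d. c i = 0))"

text \<open>The K-extension of the curve Im(rho) (for K = F_q this is the curve itself,
  for K = UNIV the F_{q^n}-extension): the points rho(s,t), (s,t) in K^2 - {0}.\<close>
definition curve_ext :: "'a set \<Rightarrow> nat \<Rightarrow> (nat \<Rightarrow> 'm \<Rightarrow> 'a::field) \<Rightarrow> ('m \<Rightarrow> 'a) set set" where
  "curve_ext K d e = {pt (rho d e s t) | s t. s \<in> K \<and> t \<in> K \<and> (s, t) \<noteq> (0, 0)}"

text \<open>S is the set of lines <rho1(X), rho2(psi(X))>, X ranging over PG(1,K), for some
  psi in PGL(2,L) (matrix entries in L, nonzero determinant).
  With K = UNIV, L = UNIV: a normal rational scroll of PG(N,q^n) defined by C1*, C2*.
  With K = UNIV, L = F_q: the F_{q^n}-extension of a normal rational scroll of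
  PG(N,q) defined by C1, C2.\<close>
definition scroll_over ::
  "'a set \<Rightarrow> 'a set \<Rightarrow> nat \<Rightarrow> (nat \<Rightarrow> 'm \<Rightarrow> 'a::field) \<Rightarrow> nat \<Rightarrow> (nat \<Rightarrow> 'm \<Rightarrow> 'a)
     \<Rightarrow> ('m \<Rightarrow> 'a) set set \<Rightarrow> bool" where
  "scroll_over K L d1 e d2 f S \<longleftrightarrow>
     (\<exists>a b c d. a \<in> L \<and> b \<in> L \<and> c \<in> L \<and> d \<in> L \<and> a * d - b * c \<noteq> 0 \<and>
        S = {pline (pt (rho d1 e s t)) (pt (rho d2 f (a * s + b * t) (c * s + d * t))) | s t.
               s \<in> K \<and> t \<in> K \<and> (s, t) \<noteq> (0, 0)})"

definition good_scroll ::
  "nat \<Rightarrow> nat \<Rightarrow> (nat \<Rightarrow> 'm \<Rightarrow> 'a::field) \<Rightarrow> nat \<Rightarrow> (nat \<Rightarrow> 'm \<Rightarrow> 'a)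
     \<Rightarrow> ('m \<Rightarrow> 'a) set set \<Rightarrow> bool" where
  "good_scroll q d1 e d2 f S \<longleftrightarrow>
     scroll_over UNIV UNIV d1 e d2 f S \<and> scroll_over UNIV (GFq q) d1 e d2 f S"

end

theory Submission
  imports Defs "HOL-Number_Theory.Residues"
begin

(* Write P = rho1(s0,t0), Q = rho2(u0,v0) and let
   psi = (a b; c d) have entries in F_q.  Because the vectors e_0..e_d1, f_0..f_d2 stay
   linearly independent over F_{q^n} (Galois descent: a relation with coefficients in
   F_{q^n} between F_q-rational vectors can be shortened by subtracting its Frobenius
   image), a line <rho1(X), rho2(Y)> with X, Y != 0 lies on the scroll defined by psi
   iff psi maps X to Y projectively.  Applying sigma^i to that relation shows that psi,
   having F_q-entries, also maps X^(q^i) to Y^(q^i): this is the second claim. *)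

section \<open>The Frobenius map of a finite field\<close>

lemma prime_CHAR_finite_field: "prime CHAR('a::{field,finite})"
  using prime_CHAR_semidom[OF finite_imp_CHAR_pos[where 'a='a]] by simp

text \<open>A field with \<open>p\<^sup>m\<close> elements has characteristic \<open>p\<close>, so \<open>q = p\<^sup>k\<close> is a power
  of the characteristic and \<open>x \<mapsto> x\<^sup>q\<close> is additive.\<close>
lemma CHAR_of_card_prime_power:
  fixes p m :: nat
  assumes "prime p" and "card (UNIV :: ('a::{field,finite}) set) = p ^ m"
  shows "CHAR('a) = p"
proof -
  note prime = prime_CHAR_finite_field[where 'a='a]
  have "CHAR('a) dvd p ^ m" using CHAR_dvd_CARD[where 'a='a] assms(2) by simp
  hence "CHAR('a) dvd p" using prime prime_dvd_power by blast
  thus ?thesis using prime assms(1) primes_dvd_imp_eq by blast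
qed

lemma power_iterate_fixed:
  assumes "(x::'a::monoid_mult) ^ q = x"
  shows "x ^ (q ^ i) = x"
proof (induction i)
  case (Suc i)
  have "x ^ (q ^ Suc i) = (x ^ q) ^ (q ^ i)" by (simp add: power_mult mult.commute)
  thus ?case using Suc assms by simp
qed simp

context
  fixes Q :: nat and j :: nat
  assumes Q_char_power: "Q = CHAR('a::{field,finite}) ^ j"
begin

lemma frobenius_add: "((x::'a) + y) ^ Q = x ^ Q + y ^ Q"
  using freshmans_dream'[OF prime_CHAR_finite_field Q_char_power] .

lemma frobenius_sum: "(sum (g :: 'b \<Rightarrow> 'a) A) ^ Q = (\<Sum>i\<in>A. g i ^ Q)"
  using freshmans_dream_sum'[OF prime_CHAR_finite_field Q_char_power] .

lemma frobenius_exponent_pos: "Q > 0"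
  using Q_char_power prime_CHAR_finite_field[where 'a='a] prime_gt_0_nat by simp

lemma frobenius_eq_0_iff: "(x::'a) ^ Q = 0 \<longleftrightarrow> x = 0"
  using frobenius_exponent_pos by simp

lemma frobenius_minus: "(- (x::'a)) ^ Q = - (x ^ Q)"
proof -
  have "x ^ Q + (-x) ^ Q = 0"
    using frobenius_add[of x "-x"] frobenius_exponent_pos by (simp add: power_0_left)
  thus ?thesis by (simp add: eq_neg_iff_add_eq_0 add.commute)
qed

lemma frobenius_diff: "((x::'a) - y) ^ Q = x ^ Q - y ^ Q"
  using frobenius_add[of x "-y"] frobenius_minus[of y] by simp

lemma frobenius_inj_iff: "(x::'a) ^ Q = y ^ Q \<longleftrightarrow> x = y"
  using frobenius_diff[of x y] frobenius_eq_0_iff[of "x - y"] by auto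

lemma frobenius_surj: "\<exists>y::'a. y ^ Q = x"
proof -
  have "inj (\<lambda>y::'a. y ^ Q)" using frobenius_inj_iff by (auto intro: injI)
  hence "surj (\<lambda>y::'a. y ^ Q)" using endo_inj_surj[of UNIV "\<lambda>y::'a. y ^ Q"] by simp
  thus ?thesis by (metis surjD)
qed

lemma frobenius_pair_nonzero:
  "((x::'a), (y::'a)) \<noteq> (0, 0) \<Longrightarrow> (x ^ Q, y ^ Q) \<noteq> (0, 0)"
  using frobenius_eq_0_iff[of x] frobenius_eq_0_iff[of y] by auto

end

section \<open>Galois descent of linear independence\<close>

lemma frobenius_relation:
  fixes g :: "'b \<Rightarrow> 'm \<Rightarrow> 'a::{field,finite}"
  assumes "Q = CHAR('a) ^ j" and fixed: "\<forall>l\<in>J. \<forall>k. g l k ^ Q = g l k"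
    and rel: "(\<Sum>l\<in>J. c l * g l k) = 0"
  shows "(\<Sum>l\<in>J. c l ^ Q * g l k) = 0"
proof -
  have "(\<Sum>l\<in>J. c l * g l k) ^ Q = (\<Sum>l\<in>J. (c l * g l k) ^ Q)"
    by (rule frobenius_sum[OF assms(1)])
  also have "\<dots> = (\<Sum>l\<in>J. c l ^ Q * g l k)"
    using fixed by (intro sum.cong) (auto simp: power_mult_distrib)
  finally show ?thesis using rel frobenius_exponent_pos[OF assms(1)] by (simp add: power_0_left)
qed

text \<open>A nontrivial relation
  of minimal support, normalised to have a coefficient 1, would differ from its Frobenius
  image by a relation of smaller support, forcing it to have fixed coefficients.\<close>
lemma independent_over_extension:
  fixes g :: "'b \<Rightarrow> 'm \<Rightarrow> 'a::{field,finite}"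
  assumes QC: "Q = CHAR('a) ^ j" and fin: "finite J"
    and fixed: "\<forall>l\<in>J. \<forall>k. g l k ^ Q = g l k"
    and indep: "\<forall>c. (\<forall>l\<in>J. c l ^ Q = c l) \<longrightarrow> (\<lambda>k. \<Sum>l\<in>J. c l * g l k) = (\<lambda>k. 0)
                  \<longrightarrow> (\<forall>l\<in>J. c l = 0)"
    and rel: "(\<lambda>k. \<Sum>l\<in>J. c l * g l k) = (\<lambda>k. 0)"
  shows "\<forall>l\<in>J. c l = 0"
  using rel
proof (induction "card {l\<in>J. c l \<noteq> 0}" arbitrary: c rule: less_induct)
  case less
  show ?case
  proof (rule ccontr)
    assume "\<not> (\<forall>l\<in>J. c l = 0)"
    then obtain l0 where l0: "l0 \<in> J" "c l0 \<noteq> 0" by auto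
    define c' where "c' l = c l / c l0" for l
    have rel': "(\<Sum>l\<in>J. c' l * g l k) = 0" for k
    proof -
      have "(\<Sum>l\<in>J. c' l * g l k) = (\<Sum>l\<in>J. c l * g l k) / c l0"
        by (simp add: c'_def sum_divide_distrib)
      thus ?thesis using fun_cong[OF less.prems, of k] by simp
    qed
    have rel_frob: "(\<Sum>l\<in>J. c' l ^ Q * g l k) = 0" for k
      using frobenius_relation[OF QC fixed rel'] .
    define d where "d l = c' l ^ Q - c' l" for l
    have rel_d: "(\<lambda>k. \<Sum>l\<in>J. d l * g l k) = (\<lambda>k. 0)"
    proof
      fix k
      have "(\<Sum>l\<in>J. d l * g l k) = (\<Sum>l\<in>J. c' l ^ Q * g l k) - (\<Sum>l\<in>J. c' l * g l k)"
        by (simp add: d_def left_diff_distrib sum_subtractf)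
      thus "(\<Sum>l\<in>J. d l * g l k) = 0" using rel' rel_frob by simp
    qed
    have "{l\<in>J. d l \<noteq> 0} \<subseteq> {l\<in>J. c l \<noteq> 0} - {l0}"
      using l0 frobenius_exponent_pos[OF QC] by (auto simp: d_def c'_def power_0_left)
    hence "card {l\<in>J. d l \<noteq> 0} \<le> card ({l\<in>J. c l \<noteq> 0} - {l0})"
      using fin by (intro card_mono) auto
    also have "\<dots> < card {l\<in>J. c l \<noteq> 0}"
      using fin l0 by (intro card_Diff1_less) auto
    finally have "card {l\<in>J. d l \<noteq> 0} < card {l\<in>J. c l \<noteq> 0}" .
    hence "\<forall>l\<in>J. d l = 0" using less.hyps rel_d by blast
    hence "\<forall>l\<in>J. c' l ^ Q = c' l" by (auto simp: d_def)
    hence "\<forall>l\<in>J. c' l = 0" using indep rel' by blast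
    thus False using l0 by (simp add: c'_def)
  qed
qed

section \<open>Joint independence of the two curves\<close>

definition jointly_independent ::
  "nat \<Rightarrow> (nat \<Rightarrow> 'm \<Rightarrow> 'a::field) \<Rightarrow> nat \<Rightarrow> (nat \<Rightarrow> 'm \<Rightarrow> 'a) \<Rightarrow> bool" where
  "jointly_independent d1 e d2 f \<longleftrightarrow>
     (\<forall>a b. (\<forall>k. (\<Sum>i\<le>d1. a i * e i k) + (\<Sum>j\<le>d2. b j * f j k) = 0)
        \<longrightarrow> (\<forall>i\<le>d1. a i = 0) \<and> (\<forall>j\<le>d2. b j = 0))"

lemma jointly_independent_swap:
  assumes "jointly_independent d1 e d2 f"
  shows "jointly_independent d2 f d1 e"
  unfolding jointly_independent_def
proof (intro allI impI)
  fix a b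
  assume "\<forall>k. (\<Sum>i\<le>d2. a i * f i k) + (\<Sum>j\<le>d1. b j * e j k) = 0"
  hence "\<forall>k. (\<Sum>i\<le>d1. b i * e i k) + (\<Sum>j\<le>d2. a j * f j k) = 0" by (simp add: add.commute)
  thus "(\<forall>i\<le>d2. a i = 0) \<and> (\<forall>j\<le>d1. b j = 0)"
    using assms[unfolded jointly_independent_def, rule_format, of b a] by blast
qed

lemma jointly_independent_over_GFq:
  fixes e f :: "nat \<Rightarrow> 'm \<Rightarrow> 'a::{field,finite}"
  assumes QC: "q = CHAR('a) ^ j"
    and ne: "nrc_data q d1 e" and nf: "nrc_data q d2 f"
    and disj: "span_over (GFq q) d1 e \<inter> span_over (GFq q) d2 f = {(\<lambda>k. 0)}"
    and a: "\<forall>i\<le>d1. a i \<in> GFq q" and b: "\<forall>j\<le>d2. b j \<in> GFq q"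
    and rel: "\<forall>k. (\<Sum>i\<le>d1. a i * e i k) + (\<Sum>j\<le>d2. b j * f j k) = 0"
  shows "(\<forall>i\<le>d1. a i = 0) \<and> (\<forall>j\<le>d2. b j = 0)"
proof -
  define v where "v = (\<lambda>k. \<Sum>i\<le>d1. a i * e i k)"
  have "v k = (\<Sum>j\<le>d2. (- b j) * f j k)" for k
  proof -
    have "v k + (\<Sum>j\<le>d2. b j * f j k) = 0" using rel unfolding v_def by blast
    hence "v k = - (\<Sum>j\<le>d2. b j * f j k)" by (rule eq_neg_iff_add_eq_0[THEN iffD2])
    thus ?thesis by (simp add: sum_negf)
  qed
  hence v_f: "v = (\<lambda>k. \<Sum>j\<le>d2. (- b j) * f j k)" ..
  have "\<forall>j\<le>d2. - b j \<in> GFq q"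
    using b frobenius_minus[OF QC] by (simp add: subfield_pow_def)
  hence "v \<in> span_over (GFq q) d2 f"
    unfolding span_over_def v_f by (intro CollectI exI[of _ "\<lambda>j. - b j"] conjI refl)
  moreover have "v \<in> span_over (GFq q) d1 e"
    unfolding span_over_def v_def using a by (intro CollectI exI[of _ a] conjI refl)
  ultimately have v0: "(\<lambda>k. \<Sum>i\<le>d1. a i * e i k) = (\<lambda>k. 0)"
    using disj unfolding v_def by blast
  have a0: "\<forall>i\<le>d1. a i = 0"
    using ne[unfolded nrc_data_def] a v0 by blast
  have "(\<lambda>k. \<Sum>j\<le>d2. b j * f j k) = (\<lambda>k. 0)"
  proof
    fix k
    show "(\<Sum>j\<le>d2. b j * f j k) = 0" using rel[rule_format, of k] fun_cong[OF v0, of k] by simp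
  qed
  hence "\<forall>j\<le>d2. b j = 0" using nf[unfolded nrc_data_def] b by blast
  with a0 show ?thesis by blast
qed

lemma sum_Inl_Inr:
  assumes "finite A" "finite B"
  shows "(\<Sum>l\<in>Inl ` A \<union> Inr ` B. h l) = (\<Sum>i\<in>A. h (Inl i)) + (\<Sum>j\<in>B. h (Inr j))"
  using assms by (subst sum.union_disjoint) (auto simp: sum.reindex)

text \<open>Galois descent applied to the combined family \<open>e, f\<close> indexed by a sum type.\<close>
lemma jointly_independent_ext:
  fixes e f :: "nat \<Rightarrow> 'm \<Rightarrow> 'a::{field,finite}"
  assumes QC: "q = CHAR('a) ^ j"
    and ne: "nrc_data q d1 e" and nf: "nrc_data q d2 f"
    and disj: "span_over (GFq q) d1 e \<inter> span_over (GFq q) d2 f = {(\<lambda>k. 0)}"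
  shows "jointly_independent d1 e d2 f"
  unfolding jointly_independent_def
proof (intro allI impI)
  fix a b :: "nat \<Rightarrow> 'a"
  assume rel: "\<forall>k. (\<Sum>i\<le>d1. a i * e i k) + (\<Sum>j\<le>d2. b j * f j k) = 0"
  define J where "J = Inl ` {..d1} \<union> Inr ` {..d2}"
  define g where "g = case_sum e f"
  have split: "(\<Sum>l\<in>J. c l * g l k)
      = (\<Sum>i\<le>d1. c (Inl i) * e i k) + (\<Sum>j\<le>d2. c (Inr j) * f j k)" for c :: "nat + nat \<Rightarrow> 'a" and k
    unfolding J_def g_def by (subst sum_Inl_Inr) auto
  have fin: "finite J" by (simp add: J_def)
  have fixed: "\<forall>l\<in>J. \<forall>k. g l k ^ q = g l k"
    using ne nf by (auto simp: J_def g_def nrc_data_def subfield_pow_def)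
  have indep: "\<forall>c. (\<forall>l\<in>J. c l ^ q = c l) \<longrightarrow> (\<lambda>k. \<Sum>l\<in>J. c l * g l k) = (\<lambda>k. 0)
                  \<longrightarrow> (\<forall>l\<in>J. c l = 0)"
  proof (intro allI impI)
    fix c :: "nat + nat \<Rightarrow> 'a"
    assume fixed_c: "\<forall>l\<in>J. c l ^ q = c l" and rel_c: "(\<lambda>k. \<Sum>l\<in>J. c l * g l k) = (\<lambda>k. 0)"
    have "\<forall>k. (\<Sum>i\<le>d1. c (Inl i) * e i k) + (\<Sum>j\<le>d2. c (Inr j) * f j k) = 0"
      using split[of c] fun_cong[OF rel_c] by simp
    moreover have "\<forall>i\<le>d1. c (Inl i) \<in> GFq q" "\<forall>j\<le>d2. c (Inr j) \<in> GFq q"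
      using fixed_c by (simp_all add: J_def subfield_pow_def)
    ultimately have "(\<forall>i\<le>d1. c (Inl i) = 0) \<and> (\<forall>j\<le>d2. c (Inr j) = 0)"
      by (rule jointly_independent_over_GFq[OF QC ne nf disj, rotated 2])
    thus "\<forall>l\<in>J. c l = 0" by (auto simp: J_def)
  qed
  have "(\<lambda>k. \<Sum>l\<in>J. case_sum a b l * g l k) = (\<lambda>k. 0)"
    using rel split by simp
  hence "\<forall>l\<in>J. case_sum a b l = 0"
    by (rule independent_over_extension[OF QC fin fixed indep])
  thus "(\<forall>i\<le>d1. a i = 0) \<and> (\<forall>j\<le>d2. b j = 0)" by (simp add: J_def ball_Un)
qed

section \<open>Projective points and lines\<close>

lemma pt_scale:
  assumes "(c::'a::field) \<noteq> 0"
  shows "pt (\<lambda>k. c * v k) = pt v"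
proof
  show "pt (\<lambda>k. c * v k) \<subseteq> pt v"
  proof
    fix x assume "x \<in> pt (\<lambda>k. c * v k)"
    then obtain b where "x = (\<lambda>k. (b * c) * v k)" unfolding pt_def by (auto simp: mult.assoc)
    thus "x \<in> pt v" unfolding pt_def by blast
  qed
  show "pt v \<subseteq> pt (\<lambda>k. c * v k)"
  proof
    fix x assume "x \<in> pt v"
    then obtain b where "x = (\<lambda>k. b * v k)" unfolding pt_def by blast
    hence "x = (\<lambda>k. (b / c) * (c * v k))" using assms by auto
    thus "x \<in> pt (\<lambda>k. c * v k)" unfolding pt_def by blast
  qed
qed

lemma rho_homogeneous: "rho d e (l * s) (l * t) = (\<lambda>k. l ^ d * rho d e s t k)"
proof
  fix k
  have "rho d e (l * s) (l * t) k = (\<Sum>i\<le>d. l ^ d * (s ^ (d - i) * t ^ i * e i k))"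
    unfolding rho_def
  proof (intro sum.cong refl)
    fix i assume "i \<in> {..d}"
    hence "l ^ (d - i) * l ^ i = l ^ d" by (simp flip: power_add)
    thus "(l * s) ^ (d - i) * (l * t) ^ i * e i k = l ^ d * (s ^ (d - i) * t ^ i * e i k)"
      by (simp add: power_mult_distrib algebra_simps)
  qed
  also have "\<dots> = l ^ d * rho d e s t k" by (simp add: rho_def sum_distrib_left)
  finally show "rho d e (l * s) (l * t) k = l ^ d * rho d e s t k" .
qed

lemma rho_as_combination: "rho d e s t = (\<lambda>k. \<Sum>i\<le>d. (s ^ (d - i) * t ^ i) * e i k)"
  unfolding rho_def by simp

lemma proportional_pair:
  fixes x y x' y' :: "'a::field"
  assumes "(x', y') \<noteq> (0, 0)" and "x * y' = y * x'"
  shows "\<exists>l. x = l * x' \<and> y = l * y'"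
proof (cases "x' = 0")
  case True
  hence "y' \<noteq> 0" using assms(1) by auto
  thus ?thesis using assms True by (intro exI[of _ "y / y'"]) auto
next
  case False
  hence "y = (x / x') * y'" using assms(2) by (simp add: field_simps)
  thus ?thesis using False by (intro exI[of _ "x / x'"]) auto
qed

lemma pt_rho_proportional:
  fixes x y x' y' :: "'a::field"
  assumes "(x', y') \<noteq> (0, 0)" and "(x, y) \<noteq> (0, 0)" and "x * y' = y * x'"
  shows "pt (rho d e x y) = pt (rho d e x' y')"
proof -
  obtain l where l: "x = l * x'" "y = l * y'" using proportional_pair[OF assms(1,3)] by blast
  hence "l \<noteq> 0" using assms(2) by auto
  thus ?thesis using l rho_homogeneous[of d e l x' y'] pt_scale[of "l ^ d"] by simp
qed

lemma pline_pt: "pline (pt u) (pt v) = {(\<lambda>k. a * u k + b * v k) | a b. True}"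
proof
  show "pline (pt u) (pt v) \<subseteq> {(\<lambda>k. a * u k + b * v k) | a b. True}"
    unfolding pline_def pt_def by blast
  show "{(\<lambda>k. a * u k + b * v k) | a b. True} \<subseteq> pline (pt u) (pt v)"
  proof
    fix z assume "z \<in> {(\<lambda>k. a * u k + b * v k) | a b. True}"
    then obtain a b where z: "z = (\<lambda>k. a * u k + b * v k)" by blast
    have "(\<lambda>k. a * u k) \<in> pt u" "(\<lambda>k. b * v k) \<in> pt v" unfolding pt_def by blast+
    thus "z \<in> pline (pt u) (pt v)" unfolding pline_def z mem_Collect_eq
      by (intro exI[of _ "\<lambda>k. a * u k"] exI[of _ "\<lambda>k. b * v k"]) simp
  qed
qed

lemma pline_subset_swap: "pline A B \<subseteq> pline B A"
proof
  fix z assume "z \<in> pline A B"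
  then obtain x y where "z = (\<lambda>k. x k + y k)" "x \<in> A" "y \<in> B" unfolding pline_def by blast
  hence "z = (\<lambda>k. y k + x k)" "y \<in> B" "x \<in> A" by (auto simp: add.commute)
  thus "z \<in> pline B A" unfolding pline_def by blast
qed

lemma pline_comm: "pline A B = pline B A"
  using pline_subset_swap by blast

text \<open>If two lines, each joining a point of the span of \<open>e\<close> to a point of the span
  of \<open>f\<close>, coincide, then their points in the span of \<open>e\<close> coincide (the coefficient
  vectors are proportional): the line meets that span in a single point.\<close>
lemma pline_eq_first_coeffs:
  fixes e f :: "nat \<Rightarrow> 'm \<Rightarrow> 'a::field"
  assumes DS: "jointly_independent d1 e d2 f"
    and eq: "pline (pt (\<lambda>k. \<Sum>i\<le>d1. a i * e i k)) (pt (\<lambda>k. \<Sum>j\<le>d2. b j * f j k))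
           = pline (pt (\<lambda>k. \<Sum>i\<le>d1. a' i * e i k)) (pt (\<lambda>k. \<Sum>j\<le>d2. b' j * f j k))"
  shows "\<exists>\<alpha>. \<forall>i\<le>d1. a' i = \<alpha> * a i"
proof -
  have "(\<lambda>k. \<Sum>i\<le>d1. a' i * e i k)
      \<in> pline (pt (\<lambda>k. \<Sum>i\<le>d1. a' i * e i k)) (pt (\<lambda>k. \<Sum>j\<le>d2. b' j * f j k))"
    unfolding pline_pt by (intro CollectI exI[of _ 1] exI[of _ 0]) simp
  then obtain \<alpha> \<beta> where ab: "\<forall>k. (\<Sum>i\<le>d1. a' i * e i k)
        = \<alpha> * (\<Sum>i\<le>d1. a i * e i k) + \<beta> * (\<Sum>j\<le>d2. b j * f j k)"
    unfolding eq[symmetric] pline_pt by (auto dest: fun_cong)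
  have "\<forall>k. (\<Sum>i\<le>d1. (a' i - \<alpha> * a i) * e i k) + (\<Sum>j\<le>d2. (- \<beta> * b j) * f j k) = 0"
    using ab by (simp add: left_diff_distrib sum_subtractf sum_distrib_left sum_negf mult.assoc)
  hence "\<forall>i\<le>d1. a' i - \<alpha> * a i = 0"
    using DS[unfolded jointly_independent_def, rule_format,
        of "\<lambda>i. a' i - \<alpha> * a i" "\<lambda>j. - \<beta> * b j"] by blast
  thus ?thesis by auto
qed

lemma pline_eq_second_coeffs:
  fixes e f :: "nat \<Rightarrow> 'm \<Rightarrow> 'a::field"
  assumes DS: "jointly_independent d1 e d2 f"
    and eq: "pline (pt (\<lambda>k. \<Sum>i\<le>d1. a i * e i k)) (pt (\<lambda>k. \<Sum>j\<le>d2. b j * f j k))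
           = pline (pt (\<lambda>k. \<Sum>i\<le>d1. a' i * e i k)) (pt (\<lambda>k. \<Sum>j\<le>d2. b' j * f j k))"
  shows "\<exists>\<beta>. \<forall>j\<le>d2. b' j = \<beta> * b j"
proof -
  have "pline (pt (\<lambda>k. \<Sum>j\<le>d2. b j * f j k)) (pt (\<lambda>k. \<Sum>i\<le>d1. a i * e i k))
      = pline (pt (\<lambda>k. \<Sum>j\<le>d2. b' j * f j k)) (pt (\<lambda>k. \<Sum>i\<le>d1. a' i * e i k))"
    using eq by (simp only: pline_comm[of "pt (\<lambda>k. \<Sum>j\<le>d2. _ j * f j k)"])
  thus ?thesis by (rule pline_eq_first_coeffs[OF jointly_independent_swap[OF DS]])
qed

lemma monomials_proportional:
  fixes s t s' t' a :: "'a::field"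
  assumes d: "1 \<le> d" and nz: "(s, t) \<noteq> (0, 0)"
    and c: "\<forall>i\<le>d. s ^ (d - i) * t ^ i = a * (s' ^ (d - i) * t' ^ i)"
  shows "s * t' = t * s'"
proof (cases "s = 0")
  case False
  have c0: "s ^ d = a * s' ^ d" using c[rule_format, of 0] by simp
  have c1: "s ^ (d - 1) * t = a * (s' ^ (d - 1) * t')" using c[rule_format, of 1] d by simp
  have sd: "s ^ d = s ^ (d - 1) * s" "s' ^ d = s' ^ (d - 1) * s'"
    using d by (metis le_add_diff_inverse2 power_add power_one_right)+
  have "s ^ (d - 1) * (t * s') = s ^ (d - 1) * (s * t')"
    using c0 c1 sd by (simp add: algebra_simps)
  thus ?thesis using False by simp
next
  case True
  hence t: "t \<noteq> 0" using nz by auto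
  have cd: "t ^ d = a * t' ^ d" using c[rule_format, of d] by simp
  hence "a \<noteq> 0" "t' \<noteq> 0" using t d by (auto simp: power_0_left)
  have "s * t ^ (d - 1) = a * (s' * t' ^ (d - 1))"
    using c[rule_format, of "d - 1"] d by simp
  hence "s' = 0" using True \<open>a \<noteq> 0\<close> \<open>t' \<noteq> 0\<close> by simp
  thus ?thesis using True by simp
qed

section \<open>Lines of a scroll\<close>

definition scroll_lines ::
  "nat \<Rightarrow> (nat \<Rightarrow> 'm \<Rightarrow> 'a::field) \<Rightarrow> nat \<Rightarrow> (nat \<Rightarrow> 'm \<Rightarrow> 'a) \<Rightarrow> 'a \<Rightarrow> 'a \<Rightarrow> 'a \<Rightarrow> 'a
     \<Rightarrow> ('m \<Rightarrow> 'a) set set" where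
  "scroll_lines d1 e d2 f a b c d =
     {pline (pt (rho d1 e s t)) (pt (rho d2 f (a * s + b * t) (c * s + d * t))) | s t.
        (s, t) \<noteq> (0, 0)}"

definition projectivity_maps :: "'a::field \<Rightarrow> 'a \<Rightarrow> 'a \<Rightarrow> 'a \<Rightarrow> 'a \<Rightarrow> 'a \<Rightarrow> 'a \<Rightarrow> 'a \<Rightarrow> bool" where
  "projectivity_maps a b c d s t u v \<longleftrightarrow> (a * s + b * t) * v = (c * s + d * t) * u"

lemma good_scroll_lines:
  assumes "good_scroll q d1 e d2 f S"
  obtains a b c d where "a ^ q = a" "b ^ q = b" "c ^ q = c" "d ^ q = d" "a * d - b * c \<noteq> 0"
    and "S = scroll_lines d1 e d2 f a b c d"
  using assms unfolding good_scroll_def scroll_over_def scroll_lines_def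
  by (auto simp: subfield_pow_def)

lemma invertible_image_nonzero:
  fixes a b c d s t :: "'a::field"
  assumes "a * d - b * c \<noteq> 0" and "(s, t) \<noteq> (0, 0)"
  shows "(a * s + b * t, c * s + d * t) \<noteq> (0, 0)"
proof
  assume "(a * s + b * t, c * s + d * t) = (0, 0)"
  moreover have "(a * d - b * c) * s = d * (a * s + b * t) - b * (c * s + d * t)"
    "(a * d - b * c) * t = a * (c * s + d * t) - c * (a * s + b * t)"
    by (simp_all add: algebra_simps)
  ultimately show False using assms by auto
qed

text \<open>The line \<open>\<langle>rho\<^sub>1(X), rho\<^sub>2(Y)\<rangle>\<close> lies on the scroll of \<open>\<psi>\<close> exactly when
  \<open>\<psi>\<close> maps \<open>X\<close> to \<open>Y\<close>; joint independence makes \<open>X\<close> and \<open>Y\<close> recoverable from the line.\<close>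
lemma line_in_scroll_iff:
  fixes e f :: "nat \<Rightarrow> 'm \<Rightarrow> 'a::field"
  assumes DS: "jointly_independent d1 e d2 f" and d1: "1 \<le> d1" and d2: "1 \<le> d2"
    and det: "a * d - b * c \<noteq> 0" and X: "(s0, t0) \<noteq> (0, 0)" and Y: "(u0, v0) \<noteq> (0, 0)"
  shows "pline (pt (rho d1 e s0 t0)) (pt (rho d2 f u0 v0)) \<in> scroll_lines d1 e d2 f a b c d
     \<longleftrightarrow> projectivity_maps a b c d s0 t0 u0 v0"
proof
  assume "pline (pt (rho d1 e s0 t0)) (pt (rho d2 f u0 v0)) \<in> scroll_lines d1 e d2 f a b c d"
  then obtain s t where st: "(s, t) \<noteq> (0, 0)"
    and eq: "pline (pt (rho d1 e s0 t0)) (pt (rho d2 f u0 v0))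
           = pline (pt (rho d1 e s t)) (pt (rho d2 f (a*s+b*t) (c*s+d*t)))"
    unfolding scroll_lines_def by blast
  note eq' = eq[unfolded rho_as_combination]
  obtain \<alpha> where "\<forall>i\<le>d1. s ^ (d1 - i) * t ^ i = \<alpha> * (s0 ^ (d1 - i) * t0 ^ i)"
    using pline_eq_first_coeffs[OF DS eq'] by blast
  hence "s * t0 = t * s0" by (rule monomials_proportional[OF d1 st])
  then obtain l where l: "s = l * s0" "t = l * t0" using proportional_pair[OF X] by blast
  obtain \<beta> where "\<forall>j\<le>d2. (a*s+b*t) ^ (d2 - j) * (c*s+d*t) ^ j = \<beta> * (u0 ^ (d2 - j) * v0 ^ j)"
    using pline_eq_second_coeffs[OF DS eq'] by blast
  hence "(a*s+b*t) * v0 = (c*s+d*t) * u0"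
    by (rule monomials_proportional[OF d2 invertible_image_nonzero[OF det st]])
  hence "l * ((a * s0 + b * t0) * v0) = l * ((c * s0 + d * t0) * u0)"
    unfolding l by (simp add: algebra_simps)
  moreover have "l \<noteq> 0" using l st by auto
  ultimately show "projectivity_maps a b c d s0 t0 u0 v0"
    unfolding projectivity_maps_def by simp
next
  assume "projectivity_maps a b c d s0 t0 u0 v0"
  hence "u0 * (c * s0 + d * t0) = v0 * (a * s0 + b * t0)"
    by (simp add: projectivity_maps_def mult.commute)
  hence "pt (rho d2 f u0 v0) = pt (rho d2 f (a * s0 + b * t0) (c * s0 + d * t0))"
    using Y invertible_image_nonzero[OF det X] by (intro pt_rho_proportional)
  thus "pline (pt (rho d1 e s0 t0)) (pt (rho d2 f u0 v0)) \<in> scroll_lines d1 e d2 f a b c d"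
    unfolding scroll_lines_def using X by auto
qed

lemma scroll_lines_subset:
  fixes a b c d a' b' c' d' :: "'a::field"
  assumes eqn: "\<forall>s t. (a*s+b*t)*(c'*s+d'*t) = (c*s+d*t)*(a'*s+b'*t)"
    and det: "a * d - b * c \<noteq> 0" and det': "a' * d' - b' * c' \<noteq> 0"
  shows "scroll_lines d1 e d2 f a b c d \<subseteq> scroll_lines d1 e d2 f a' b' c' d'"
proof
  fix x assume "x \<in> scroll_lines d1 e d2 f a b c d"
  then obtain s t where st: "(s, t) \<noteq> (0, 0)"
    and x: "x = pline (pt (rho d1 e s t)) (pt (rho d2 f (a * s + b * t) (c * s + d * t)))"
    unfolding scroll_lines_def by blast
  have "pt (rho d2 f (a * s + b * t) (c * s + d * t))
      = pt (rho d2 f (a' * s + b' * t) (c' * s + d' * t))"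
    using eqn invertible_image_nonzero[OF det st] invertible_image_nonzero[OF det' st]
    by (intro pt_rho_proportional) auto
  thus "x \<in> scroll_lines d1 e d2 f a' b' c' d'" unfolding scroll_lines_def x using st by auto
qed

lemma proportional_to_same_pair:
  fixes A C A' C' u v :: "'a::field"
  assumes "(u, v) \<noteq> (0, 0)" and "A * v = C * u" and "A' * v = C' * u"
  shows "A * C' = C * A'"
proof (cases "u = 0")
  case True
  thus ?thesis using assms by auto
next
  case False
  hence "C = A * v / u" "C' = A' * v / u" using assms by (auto simp: field_simps)
  thus ?thesis by simp
qed

text \<open>A binary quadratic form vanishing at three pairwise non-proportional points is zero
  (explicit Lagrange interpolation).\<close>
lemma binary_quadratic_form_vanishing:
  fixes A B C x0 y0 x1 y1 x2 y2 :: "'a::field"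
  assumes e0: "A*x0^2 + B*x0*y0 + C*y0^2 = 0" and e1: "A*x1^2 + B*x1*y1 + C*y1^2 = 0"
    and e2: "A*x2^2 + B*x2*y2 + C*y2^2 = 0"
    and n: "x0*y1 - y0*x1 \<noteq> 0" "x0*y2 - y0*x2 \<noteq> 0" "x1*y2 - y1*x2 \<noteq> 0"
  shows "A = 0 \<and> B = 0 \<and> C = 0"
proof -
  define D where "D = (x0*y1 - y0*x1)*(x0*y2 - y0*x2)*(x1*y2 - y1*x2)"
  define E0 where "E0 = A*x0^2 + B*x0*y0 + C*y0^2"
  define E1 where "E1 = A*x1^2 + B*x1*y1 + C*y1^2"
  define E2 where "E2 = A*x2^2 + B*x2*y2 + C*y2^2"
  have "A * D = y1*y2*(x1*y2-x2*y1)*E0 - y0*y2*(x0*y2-x2*y0)*E1 + y0*y1*(x0*y1-x1*y0)*E2"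
    "B * D = -(x1^2*y2^2-y1^2*x2^2)*E0+(x0^2*y2^2-y0^2*x2^2)*E1-(x0^2*y1^2-y0^2*x1^2)*E2"
    "C * D = x1*x2*(x1*y2-x2*y1)*E0 - x0*x2*(x0*y2-x2*y0)*E1 + x0*x1*(x0*y1-x1*y0)*E2"
    unfolding D_def E0_def E1_def E2_def by (simp_all add: power2_eq_square algebra_simps)
  moreover have "E0 = 0" "E1 = 0" "E2 = 0" using e0 e1 e2 by (simp_all add: E0_def E1_def E2_def)
  moreover have "D \<noteq> 0" using n by (simp add: D_def)
  ultimately show ?thesis by simp
qed

text \<open>Two invertible matrices mapping three pairwise non-proportional points \<open>X\<^sub>i\<close> to the
  same points \<open>Y\<^sub>i\<close> define the same scroll: the cross determinant of their images is a
  quadratic form in \<open>X\<close> vanishing at the three \<open>X\<^sub>i\<close>.\<close>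
lemma scroll_determined_by_three_lines:
  fixes x y u v :: "nat \<Rightarrow> 'a::field"
  assumes maps: "\<forall>i\<le>2. projectivity_maps a b c d (x i) (y i) (u i) (v i)"
    and maps': "\<forall>i\<le>2. projectivity_maps a' b' c' d' (x i) (y i) (u i) (v i)"
    and Y: "\<forall>i\<le>2. (u i, v i) \<noteq> (0, 0)"
    and n: "x 0 * y 1 - y 0 * x 1 \<noteq> 0" "x 0 * y 2 - y 0 * x 2 \<noteq> 0" "x 1 * y 2 - y 1 * x 2 \<noteq> 0"
    and det: "a * d - b * c \<noteq> 0" and det': "a' * d' - b' * c' \<noteq> 0"
  shows "scroll_lines d1 e d2 f a b c d = scroll_lines d1 e d2 f a' b' c' d'"
proof -
  define A where "A = a * c' - c * a'"
  define B where "B = a * d' + b * c' - c * b' - d * a'"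
  define C where "C = b * d' - d * b'"
  have form: "A * s^2 + B * s * t + C * t^2 = (a*s+b*t)*(c'*s+d'*t) - (c*s+d*t)*(a'*s+b'*t)"
    for s t unfolding A_def B_def C_def by (simp add: algebra_simps power2_eq_square)
  have vanish: "A * (x i)^2 + B * x i * y i + C * (y i)^2 = 0" if "i \<le> 2" for i
  proof -
    have "(a * x i + b * y i) * v i = (c * x i + d * y i) * u i"
      "(a' * x i + b' * y i) * v i = (c' * x i + d' * y i) * u i"
      using that maps maps' by (auto simp: projectivity_maps_def)
    hence "(a * x i + b * y i) * (c' * x i + d' * y i)
        = (c * x i + d * y i) * (a' * x i + b' * y i)"
      using proportional_to_same_pair Y that by blast
    thus ?thesis unfolding form by simp
  qed
  have "A = 0 \<and> B = 0 \<and> C = 0"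
    by (rule binary_quadratic_form_vanishing[OF vanish vanish vanish n]) simp_all
  hence eqn: "\<forall>s t. (a*s+b*t)*(c'*s+d'*t) = (c*s+d*t)*(a'*s+b'*t)"
    using form by simp
  hence eqn': "\<forall>s t. (a'*s+b'*t)*(c*s+d*t) = (c'*s+d'*t)*(a*s+b*t)"
    by (simp add: mult.commute)
  show ?thesis
    using scroll_lines_subset[OF eqn det det'] scroll_lines_subset[OF eqn' det' det] by blast
qed

section \<open>The action of \<open>\<sigma>\<close>\<close>

text \<open>A power of the Frobenius map, applied coordinatewise, maps the point spanned by \<open>v\<close>
  onto the point spanned by the image of \<open>v\<close> (surjectivity is needed for scalars).\<close>
lemma frobenius_image_pt:
  assumes QC: "Q = CHAR('a::{field,finite}) ^ j"
  shows "(\<lambda>v k. v k ^ Q) ` pt (v :: 'm \<Rightarrow> 'a) = pt (\<lambda>k. v k ^ Q)"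
proof
  show "(\<lambda>v k. v k ^ Q) ` pt v \<subseteq> pt (\<lambda>k. v k ^ Q)"
    unfolding pt_def by (auto simp: power_mult_distrib)
  show "pt (\<lambda>k. v k ^ Q) \<subseteq> (\<lambda>v k. v k ^ Q) ` pt v"
  proof
    fix x assume "x \<in> pt (\<lambda>k. v k ^ Q)"
    then obtain c where x: "x = (\<lambda>k. c * v k ^ Q)" unfolding pt_def by blast
    obtain c' where "c' ^ Q = c" using frobenius_surj[OF QC] by blast
    hence "x = (\<lambda>k. (c' * v k) ^ Q)" using x by (simp add: power_mult_distrib)
    moreover have "(\<lambda>k. c' * v k) \<in> pt v" unfolding pt_def by blast
    ultimately show "x \<in> (\<lambda>v k. v k ^ Q) ` pt v" by (rule image_eqI)
  qed
qed

lemma frobenius_rho: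
  assumes QC: "Q = CHAR('a::{field,finite}) ^ j"
    and fixed: "\<forall>i\<le>d. \<forall>k. e i k ^ Q = (e i k :: 'a)"
  shows "(\<lambda>k. rho d e s t k ^ Q) = rho d e (s ^ Q) (t ^ Q)"
proof
  fix k
  have "rho d e s t k ^ Q = (\<Sum>i\<le>d. (s ^ (d - i) * t ^ i * e i k) ^ Q)"
    unfolding rho_def by (rule frobenius_sum[OF QC])
  also have "\<dots> = rho d e (s ^ Q) (t ^ Q) k"
    unfolding rho_def using fixed
    by (intro sum.cong refl) (simp add: power_mult_distrib flip: power_mult mult.commute)
  finally show "rho d e s t k ^ Q = rho d e (s ^ Q) (t ^ Q) k" .
qed

lemma frob_curve_point:
  assumes qC: "q = CHAR('a::{field,finite}) ^ j" and e: "\<forall>i\<le>d. \<forall>k. e i k \<in> GFq q"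
  shows "frob q i (pt (rho d e s t)) = pt (rho d e (s ^ q ^ i) (t ^ q ^ i) :: 'm \<Rightarrow> 'a)"
proof -
  have QC: "q ^ i = CHAR('a) ^ (j * i)" using qC by (simp add: power_mult)
  have fixed: "\<forall>l\<le>d. \<forall>k. e l k ^ (q ^ i) = e l k"
    using e by (auto simp: subfield_pow_def intro!: power_iterate_fixed)
  show ?thesis unfolding frob_def frobenius_image_pt[OF QC] frobenius_rho[OF QC fixed] ..
qed

lemma projectivity_maps_frobenius:
  assumes QC: "Q = CHAR('a::{field,finite}) ^ j"
    and fixed: "a ^ Q = a" "b ^ Q = b" "c ^ Q = c" "d ^ Q = (d::'a)"
    and "projectivity_maps a b c d s t u v"
  shows "projectivity_maps a b c d (s ^ Q) (t ^ Q) (u ^ Q) (v ^ Q)"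
proof -
  have "((a * s + b * t) * v) ^ Q = ((c * s + d * t) * u) ^ Q"
    using assms(6) by (simp add: projectivity_maps_def)
  thus ?thesis using fixed
    by (simp add: projectivity_maps_def frobenius_add[OF QC] power_mult_distrib)
qed

lemma good_scroll_through_line:
  fixes e f :: "nat \<Rightarrow> 'm \<Rightarrow> 'a::{field,finite}"
  assumes qC: "q = CHAR('a) ^ j" and DS: "jointly_independent d1 e d2 f"
    and d1: "1 \<le> d1" and d2: "1 \<le> d2" and X: "(s0, t0) \<noteq> (0, 0)" and Y: "(u0, v0) \<noteq> (0, 0)"
    and S: "good_scroll q d1 e d2 f S"
    and line: "pline (pt (rho d1 e s0 t0)) (pt (rho d2 f u0 v0)) \<in> S"
  obtains a b c d where "S = scroll_lines d1 e d2 f a b c d" and "a * d - b * c \<noteq> 0"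
    and "\<forall>i. projectivity_maps a b c d (s0 ^ q ^ i) (t0 ^ q ^ i) (u0 ^ q ^ i) (v0 ^ q ^ i)"
proof -
  obtain a b c d where fixed: "a ^ q = a" "b ^ q = b" "c ^ q = c" "d ^ q = d"
    and det: "a * d - b * c \<noteq> 0" and S_eq: "S = scroll_lines d1 e d2 f a b c d"
    using good_scroll_lines[OF S] .
  have maps: "projectivity_maps a b c d s0 t0 u0 v0"
    using line line_in_scroll_iff[OF DS d1 d2 det X Y] S_eq by simp
  have QC: "q ^ i = CHAR('a) ^ (j * i)" for i using qC by (simp add: power_mult)
  have "projectivity_maps a b c d (s0 ^ q ^ i) (t0 ^ q ^ i) (u0 ^ q ^ i) (v0 ^ q ^ i)" for i
    by (rule projectivity_maps_frobenius[OF QC _ _ _ _ maps])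
      (use fixed in \<open>auto intro: power_iterate_fixed\<close>)
  with S_eq det that show ?thesis by blast
qed

lemma curve_point_in_subfield_extension:
  fixes s0 t0 :: "'a::field"
  assumes q: "q > 0" and X: "(s0, t0) \<noteq> (0, 0)"
    and r: "s0 * t0 ^ (q ^ m) = t0 * s0 ^ (q ^ m)"
  shows "pt (rho d e s0 t0) \<in> curve_ext (subfield_pow q m) d e"
proof (cases "s0 = 0")
  case True
  hence "pt (rho d e s0 t0) = pt (rho d e 0 1)" using X by (intro pt_rho_proportional) auto
  moreover have "(0::'a) \<in> subfield_pow q m" "(1::'a) \<in> subfield_pow q m"
    using q by (auto simp: subfield_pow_def power_0_left)
  ultimately show ?thesis unfolding curve_ext_def mem_Collect_eq
    by (intro exI[of _ 0] exI[of _ 1]) simp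
next
  case False
  define r' where "r' = t0 / s0"
  have "s0 ^ (q ^ m) \<noteq> 0" using False by simp
  hence "r' ^ (q ^ m) = r'" using r False unfolding r'_def by (simp add: power_divide field_simps)
  hence "r' \<in> subfield_pow q m" "(1::'a) \<in> subfield_pow q m" by (simp_all add: subfield_pow_def)
  moreover have "pt (rho d e s0 t0) = pt (rho d e 1 r')" using X False unfolding r'_def
    by (intro pt_rho_proportional) auto
  ultimately show ?thesis unfolding curve_ext_def mem_Collect_eq
    by (intro exI[of _ 1] exI[of _ r']) simp
qed

lemma conjugate_parameters_independent:
  fixes s0 t0 :: "'a::{field,finite}"
  assumes qC: "q = CHAR('a) ^ j" and X: "(s0, t0) \<noteq> (0, 0)"
    and P1: "pt (rho d e s0 t0) \<notin> curve_ext (GFq q) d e"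
    and P2: "pt (rho d e s0 t0) \<notin> curve_ext (subfield_pow q 2) d e"
  shows "s0 ^ q ^ 0 * t0 ^ q ^ 1 - t0 ^ q ^ 0 * s0 ^ q ^ 1 \<noteq> 0"
    and "s0 ^ q ^ 0 * t0 ^ q ^ 2 - t0 ^ q ^ 0 * s0 ^ q ^ 2 \<noteq> 0"
    and "s0 ^ q ^ 1 * t0 ^ q ^ 2 - t0 ^ q ^ 1 * s0 ^ q ^ 2 \<noteq> 0"
proof -
  have q: "q > 0" using frobenius_exponent_pos[OF qC] .
  show n01: "s0 ^ q ^ 0 * t0 ^ q ^ 1 - t0 ^ q ^ 0 * s0 ^ q ^ 1 \<noteq> 0"
  proof
    assume "s0 ^ q ^ 0 * t0 ^ q ^ 1 - t0 ^ q ^ 0 * s0 ^ q ^ 1 = 0"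
    hence "s0 * t0 ^ q ^ 1 = t0 * s0 ^ q ^ 1" by simp
    thus False using curve_point_in_subfield_extension[OF q X] P1 by blast
  qed
  show "s0 ^ q ^ 0 * t0 ^ q ^ 2 - t0 ^ q ^ 0 * s0 ^ q ^ 2 \<noteq> 0"
  proof
    assume "s0 ^ q ^ 0 * t0 ^ q ^ 2 - t0 ^ q ^ 0 * s0 ^ q ^ 2 = 0"
    hence "s0 * t0 ^ q ^ 2 = t0 * s0 ^ q ^ 2" by simp
    thus False using curve_point_in_subfield_extension[OF q X] P2 by blast
  qed
  have pow_q: "(z ^ q ^ i) ^ q = z ^ q ^ Suc i" for z :: 'a and i
    by (simp add: mult.commute flip: power_mult)
  have "(s0 ^ q ^ 0 * t0 ^ q ^ 1 - t0 ^ q ^ 0 * s0 ^ q ^ 1) ^ q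
      = s0 ^ q ^ 1 * t0 ^ q ^ 2 - t0 ^ q ^ 1 * s0 ^ q ^ 2"
    unfolding frobenius_diff[OF qC] power_mult_distrib pow_q numeral_2_eq_2 One_nat_def ..
  thus "s0 ^ q ^ 1 * t0 ^ q ^ 2 - t0 ^ q ^ 1 * s0 ^ q ^ 2 \<noteq> 0"
    using n01 frobenius_eq_0_iff[OF qC] by metis
qed

lemma good_scroll_contains_conjugate_lines:
  fixes e f :: "nat \<Rightarrow> 'm \<Rightarrow> 'a::{field,finite}"
  assumes qC: "q = CHAR('a) ^ j" and DS: "jointly_independent d1 e d2 f"
    and d1: "1 \<le> d1" and d2: "1 \<le> d2" and X: "(s0, t0) \<noteq> (0, 0)" and Y: "(u0, v0) \<noteq> (0, 0)"
    and e: "\<forall>i\<le>d1. \<forall>k. e i k \<in> GFq q" and f: "\<forall>i\<le>d2. \<forall>k. f i k \<in> GFq q"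
    and S: "good_scroll q d1 e d2 f S"
    and line: "pline (pt (rho d1 e s0 t0)) (pt (rho d2 f u0 v0)) \<in> S"
  shows "pline (frob q i (pt (rho d1 e s0 t0))) (frob q i (pt (rho d2 f u0 v0))) \<in> S"
proof -
  obtain a b c d where S_eq: "S = scroll_lines d1 e d2 f a b c d" and det: "a * d - b * c \<noteq> 0"
    and maps: "\<forall>i. projectivity_maps a b c d (s0 ^ q ^ i) (t0 ^ q ^ i) (u0 ^ q ^ i) (v0 ^ q ^ i)"
    using good_scroll_through_line[OF qC DS d1 d2 X Y S line] .
  have QC: "q ^ i = CHAR('a) ^ (j * i)" using qC by (simp add: power_mult)
  show ?thesis
    unfolding frob_curve_point[OF qC e] frob_curve_point[OF qC f] S_eq
      line_in_scroll_iff[OF DS d1 d2 det frobenius_pair_nonzero[OF QC X] frobenius_pair_nonzero[OF QC Y]]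
    using maps by blast
qed

text \<open>First claim: two good scrolls through \<open>\<langle>rho\<^sub>1(X), rho\<^sub>2(Y)\<rangle>\<close> coincide, since their
  matrices agree on \<open>X, X\<^sup>q, X\<^sup>q\<^sup>2\<close>.\<close>
lemma good_scroll_unique:
  fixes e f :: "nat \<Rightarrow> 'm \<Rightarrow> 'a::{field,finite}"
  assumes qC: "q = CHAR('a) ^ j" and DS: "jointly_independent d1 e d2 f"
    and d1: "1 \<le> d1" and d2: "1 \<le> d2" and X: "(s0, t0) \<noteq> (0, 0)" and Y: "(u0, v0) \<noteq> (0, 0)"
    and P1: "pt (rho d1 e s0 t0) \<notin> curve_ext (GFq q) d1 e"
    and P2: "pt (rho d1 e s0 t0) \<notin> curve_ext (subfield_pow q 2) d1 e"
    and S1: "good_scroll q d1 e d2 f S1"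
    and line1: "pline (pt (rho d1 e s0 t0)) (pt (rho d2 f u0 v0)) \<in> S1"
    and S2: "good_scroll q d1 e d2 f S2"
    and line2: "pline (pt (rho d1 e s0 t0)) (pt (rho d2 f u0 v0)) \<in> S2"
  shows "S1 = S2"
proof -
  obtain a b c d where S1_eq: "S1 = scroll_lines d1 e d2 f a b c d" and det: "a * d - b * c \<noteq> 0"
    and maps: "\<forall>i. projectivity_maps a b c d (s0 ^ q ^ i) (t0 ^ q ^ i) (u0 ^ q ^ i) (v0 ^ q ^ i)"
    using good_scroll_through_line[OF qC DS d1 d2 X Y S1 line1] .
  obtain a' b' c' d' where S2_eq: "S2 = scroll_lines d1 e d2 f a' b' c' d'"
    and det': "a' * d' - b' * c' \<noteq> 0"
    and maps': "\<forall>i. projectivity_maps a' b' c' d' (s0 ^ q ^ i) (t0 ^ q ^ i) (u0 ^ q ^ i) (v0 ^ q ^ i)"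
    using good_scroll_through_line[OF qC DS d1 d2 X Y S2 line2] .
  have QC: "q ^ i = CHAR('a) ^ (j * i)" for i using qC by (simp add: power_mult)
  have "(u0 ^ q ^ i, v0 ^ q ^ i) \<noteq> (0, 0)" for i
    by (rule frobenius_pair_nonzero[OF QC Y])
  thus ?thesis unfolding S1_eq S2_eq
    by (intro scroll_determined_by_three_lines[where x = "\<lambda>i. s0 ^ q ^ i" and y = "\<lambda>i. t0 ^ q ^ i"
          and u = "\<lambda>i. u0 ^ q ^ i" and v = "\<lambda>i. v0 ^ q ^ i",
          OF _ _ _ conjugate_parameters_independent[OF qC X P1 P2] det det'])
      (use maps maps' in simp_all)
qed

theorem lemma3p4:
  fixes e f :: "nat \<Rightarrow> 'm::finite \<Rightarrow> 'a::{field,finite}"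
    and p k q n d1 d2 :: nat
    and P Q :: "('m \<Rightarrow> 'a) set"
  assumes "prime p" and "k \<ge> 1" and "q = p ^ k" and "n \<ge> 1" and "card (UNIV :: 'a set) = q ^ n"
    and "nrc_data q d1 e" and "nrc_data q d2 f"
    and "span_over (GFq q) d1 e \<inter> span_over (GFq q) d2 f = {(\<lambda>k. 0)}"
    and "P \<in> curve_ext UNIV d1 e - curve_ext (GFq q) d1 e"
    and "Q \<in> curve_ext UNIV d2 f - curve_ext (GFq q) d2 f"
    and "P \<notin> curve_ext (subfield_pow q 2) d1 e"
  shows "(\<forall>S1 S2. good_scroll q d1 e d2 f S1 \<and> pline P Q \<in> S1 \<and>
                  good_scroll q d1 e d2 f S2 \<and> pline P Q \<in> S2 \<longrightarrow> S1 = S2)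
       \<and> (\<forall>S. good_scroll q d1 e d2 f S \<and> pline P Q \<in> S \<longrightarrow>
                (\<forall>i::nat. pline (frob q i P) (frob q i Q) \<in> S))"
proof -
  have "card (UNIV :: 'a set) = p ^ (k * n)" using assms(3,5) by (simp add: power_mult)
  hence "CHAR('a) = p" by (rule CHAR_of_card_prime_power[OF assms(1)])
  hence qC: "q = CHAR('a) ^ k" using assms(3) by simp
  have DS: "jointly_independent d1 e d2 f" using jointly_independent_ext[OF qC assms(6-8)] .
  have d1: "1 \<le> d1" and d2: "1 \<le> d2" using assms(6,7) by (auto simp: nrc_data_def)
  obtain s0 t0 where P: "P = pt (rho d1 e s0 t0)" and X: "(s0, t0) \<noteq> (0, 0)"
    using assms(9) unfolding curve_ext_def by blast
  obtain u0 v0 where Q: "Q = pt (rho d2 f u0 v0)" and Y: "(u0, v0) \<noteq> (0, 0)"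
    using assms(10) unfolding curve_ext_def by blast
  have e: "\<forall>i\<le>d1. \<forall>k. e i k \<in> GFq q" and f: "\<forall>i\<le>d2. \<forall>k. f i k \<in> GFq q"
    using assms(6,7) unfolding nrc_data_def by blast+
  have P1: "pt (rho d1 e s0 t0) \<notin> curve_ext (GFq q) d1 e"
    and P2: "pt (rho d1 e s0 t0) \<notin> curve_ext (subfield_pow q 2) d1 e"
    using assms(9,11) unfolding P by blast+
  show ?thesis unfolding P Q
    using good_scroll_unique[OF qC DS d1 d2 X Y P1 P2]
      good_scroll_contains_conjugate_lines[OF qC DS d1 d2 X Y e f] by blast
qed

end
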